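(* Let $a\in \mathcal{A}$. Then the following are equivalent: (1) $a$ has a $w$-weighted core inverse. (2) $aw\in \mathcal{A}^{\#}$ and $waw$ has a $((aw)^{D}, ((wa)^{D})^* )$-inverse. In this case, $a^{\mathrm{core},w}=(waw)^{((aw)^{D},((wa)^D)^* )}$.
   Context: $\mathcal{A}$ is a complex Banach *-algebra with identity and $w\in\mathcal{A}$. The $w$-weighted core inverse of $a$ is the unique $x$ with $a(wx)^2=x$, $(wawx)^*=wawx$, $xw(aw)^2=aw$, denoted $a^{\mathrm{core},w}$. $\mathcal{A}^{\#}$ is the set of group invertible elements; $b^D$ denotes the Drazin inverse. For $a,b,c\in\mathcal{A}$, the $(b,c)$-inverse of $a$ is the unique $x$ (if it exists) with $xab=b$, $cax=c$, $x\in b\mathcal{A}x\cap x\mathcal{A}c$, denoted $a^{(b,c)}$. *)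

theory Defs
  imports "HOL-Analysis.Analysis"
begin

class cbanach_star_algebra = real_normed_algebra_1 + banach +
  fixes scaleC :: "complex \<Rightarrow> 'a \<Rightarrow> 'a"
    and invol :: "'a \<Rightarrow> 'a"
  assumes scaleC_of_real: "scaleC (complex_of_real r) x = scaleR r x"
    and scaleC_add_right: "scaleC c (x + y) = scaleC c x + scaleC c y"
    and scaleC_add_left: "scaleC (c + d) x = scaleC c x + scaleC d x"
    and scaleC_scaleC: "scaleC c (scaleC d x) = scaleC (c * d) x"
    and scaleC_one: "scaleC 1 x = x"
    and norm_scaleC: "norm (scaleC c x) = cmod c * norm x"
    and mult_scaleC_left: "scaleC c x * y = scaleC c (x * y)"
    and mult_scaleC_right: "x * scaleC c y = scaleC c (x * y)"
    and invol_invol: "invol (invol x) = x"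
    and invol_add: "invol (x + y) = invol x + invol y"
    and invol_mult: "invol (x * y) = invol y * invol x"
    and invol_scaleC: "invol (scaleC c x) = scaleC (cnj c) (invol x)"

definition group_invertible :: "'a::ring_1 \<Rightarrow> bool" where
  "group_invertible a \<longleftrightarrow> (\<exists>x. a * x * a = a \<and> x * a * x = x \<and> a * x = x * a)"

definition is_drazin_inverse :: "'a::ring_1 \<Rightarrow> 'a \<Rightarrow> bool" where
  "is_drazin_inverse b x \<longleftrightarrow> x * b * x = x \<and> b * x = x * b \<and> (\<exists>k::nat. b ^ (k + 1) * x = b ^ k)"

definition drazin :: "'a::ring_1 \<Rightarrow> 'a" where
  "drazin b = (THE x. is_drazin_inverse b x)"

definition is_wcore_inverse :: "'a::cbanach_star_algebra \<Rightarrow> 'a \<Rightarrow> 'a \<Rightarrow> bool" where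
  "is_wcore_inverse a w x \<longleftrightarrow>
     a * (w * x)^2 = x \<and> invol (w * a * w * x) = w * a * w * x \<and> x * w * (a * w)^2 = a * w"

definition has_wcore_inverse :: "'a::cbanach_star_algebra \<Rightarrow> 'a \<Rightarrow> bool" where
  "has_wcore_inverse a w \<longleftrightarrow> (\<exists>x. is_wcore_inverse a w x)"

definition wcore_inv :: "'a::cbanach_star_algebra \<Rightarrow> 'a \<Rightarrow> 'a" where
  "wcore_inv a w = (THE x. is_wcore_inverse a w x)"

definition is_bc_inverse :: "'a::ring_1 \<Rightarrow> 'a \<Rightarrow> 'a \<Rightarrow> 'a \<Rightarrow> bool" where
  "is_bc_inverse a b c x \<longleftrightarrow> x * a * b = b \<and> c * a * x = c \<and>
     (\<exists>y. x = b * y * x) \<and> (\<exists>z. x = x * z * c)"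

definition bc_inv :: "'a::ring_1 \<Rightarrow> 'a \<Rightarrow> 'a \<Rightarrow> 'a" where
  "bc_inv a b c = (THE x. is_bc_inverse a b c x)"

end

theory Submission
  imports Defs
begin

text \<open>Write \<open>p = aw\<close>. A weighted core inverse \<open>x\<close> gives \<open>p = (xw) p\<^sup>2 \<in> \<A>p\<^sup>2\<close> and
  \<open>p \<in> p\<^sup>2\<A>\<close>, so \<open>p\<close> has a group inverse \<open>g\<close>; then \<open>p\<^sup>D = g\<close> and, by Cline's formula,
  \<open>(wa)\<^sup>D = w g\<^sup>2 a\<close>. With \<open>g\<close> at hand the two sets of equations translate into each other
  using \<open>x w p = p g\<close>, \<open>g p x = x\<close> and \<open>w p = (wa)\<^sup>D w p\<^sup>2\<close>. The involution enters only through
  \<open>q = w p y\<close>: the \<open>(b,c)\<close>-condition \<open>c w p y = c\<close> with \<open>c = ((wa)\<^sup>D)\<^sup>*\<close> yields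
  \<open>q\<^sup>* (wa)\<^sup>D = (wa)\<^sup>D\<close>, hence \<open>q\<^sup>* q = q\<close>, so \<open>q\<close> is self-adjoint. Uniqueness of
  \<open>(b,c)\<close>-inverses then makes both inverses equal.\<close>

lemma power_drazin_inverse_absorb:
  fixes b x :: "'a::ring_1"
  assumes "x * b * x = x" "b * x = x * b"
  shows "x ^ (n + 1) * b ^ n = x" and "b ^ n * x ^ (n + 1) = x"
proof -
  show "x ^ (n + 1) * b ^ n = x"
  proof (induction n)
    case (Suc n)
    have "x ^ (Suc n + 1) * b ^ Suc n = x * (x ^ (n + 1) * b ^ n) * b"
      by (simp add: mult.assoc power_commutes)
    also have "\<dots> = x" using Suc.IH assms by (metis mult.assoc)
    finally show ?case .
  qed simp
  show "b ^ n * x ^ (n + 1) = x"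
  proof (induction n)
    case (Suc n)
    have "b ^ Suc n * x ^ (Suc n + 1) = b * (b ^ n * x ^ (n + 1)) * x"
      by (simp add: mult.assoc power_commutes)
    also have "\<dots> = x" using Suc.IH assms by (metis mult.assoc)
    finally show ?case .
  qed simp
qed

lemma drazin_index_mono:
  fixes b x :: "'a::ring_1"
  assumes "b ^ (k + 1) * x = b ^ k" "k \<le> n"
  shows "b ^ (n + 1) * x = b ^ n"
proof -
  obtain d where n: "n = d + k" using \<open>k \<le> n\<close> le_iff_add by (metis add.commute)
  then have "b ^ (n + 1) * x = b ^ d * (b ^ (k + 1) * x)"
    by (simp only: add.assoc power_add mult.assoc)
  then show ?thesis using assms(1) n by (simp add: power_add)
qed

lemma is_drazin_inverse_unique:
  fixes b x y :: "'a::ring_1"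
  assumes "is_drazin_inverse b x" "is_drazin_inverse b y"
  shows "x = y"
proof -
  from assms obtain k l where
    x: "x * b * x = x" "b * x = x * b" "b ^ (k + 1) * x = b ^ k" and
    y: "y * b * y = y" "b * y = y * b" "b ^ (l + 1) * y = b ^ l"
    unfolding is_drazin_inverse_def by blast
  define m where "m = max k l"
  have x_index: "x * b ^ (m + 1) = b ^ m"
    using drazin_index_mono[OF x(3)] power_commuting_commutes[of b x "m + 1"] x(2)
    by (simp add: m_def)
  have "b ^ (m + 1) * y = b ^ m"
    using drazin_index_mono[OF y(3)] by (simp add: m_def)
  then have y_index: "b ^ m = b ^ m * b * y"
    by (metis power_Suc2 Suc_eq_plus1)
  have "x = x ^ (m + 1) * b ^ m"
    using power_drazin_inverse_absorb(1)[OF x(1,2)] by simp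
  also have "\<dots> = x ^ (m + 1) * b ^ m * (b * y)"
    by (subst y_index) (simp add: mult.assoc)
  also have "\<dots> = x * b * y"
    using power_drazin_inverse_absorb(1)[OF x(1,2)] by (simp add: mult.assoc)
  finally have x_eq: "x = x * b * y" .
  have "y = b ^ m * y ^ (m + 1)"
    using power_drazin_inverse_absorb(2)[OF y(1,2)] by simp
  also have "\<dots> = x * b * (b ^ m * y ^ (m + 1))"
    by (subst x_index[symmetric]) (simp add: mult.assoc)
  also have "\<dots> = x * b * y"
    using power_drazin_inverse_absorb(2)[OF y(1,2)] by simp
  finally show ?thesis using x_eq by simp
qed

lemma drazin_eqI:
  fixes b x :: "'a::ring_1"
  assumes "is_drazin_inverse b x"
  shows "drazin b = x"
  unfolding drazin_def using assms is_drazin_inverse_unique by blast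

lemma is_bc_inverse_unique:
  fixes a b c x y :: "'a::ring_1"
  assumes "is_bc_inverse a b c x" "is_bc_inverse a b c y"
  shows "x = y"
proof -
  from assms obtain r t where
    x: "c * a * x = c" "x = b * r * x" and y: "y * a * b = b" "y = y * t * c"
    unfolding is_bc_inverse_def by blast
  have "x = y * a * b * r * x" using x(2) y(1) by simp
  also have "\<dots> = y * a * x" using x(2) by (metis mult.assoc)
  also have "\<dots> = y * t * c * a * x" using y(2) by (metis mult.assoc)
  also have "\<dots> = y" using x(1) y(2) by (metis mult.assoc)
  finally show ?thesis .
qed

lemma bc_inv_eqI:
  fixes a b c x :: "'a::ring_1"
  assumes "is_bc_inverse a b c x"
  shows "bc_inv a b c = x"
  unfolding bc_inv_def using assms is_bc_inverse_unique by blast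

definition is_group_inverse :: "'a::ring_1 \<Rightarrow> 'a \<Rightarrow> bool" where
  "is_group_inverse p g \<longleftrightarrow> p * g * p = p \<and> g * p * g = g \<and> p * g = g * p"

lemma group_invertible_iff: "group_invertible p \<longleftrightarrow> (\<exists>g. is_group_inverse p g)"
  unfolding group_invertible_def is_group_inverse_def ..

lemma is_group_inverse_absorb:
  fixes p g :: "'a::ring_1"
  assumes "is_group_inverse p g"
  shows "g * g * p = g" "p * g * g = g" "g * p * p = p" "p * p * g = p"
  using assms unfolding is_group_inverse_def by (metis mult.assoc)+

lemma group_invertibleI:
  fixes p q u :: "'a::ring_1"
  assumes "p = q * p * p" "p = p * p * u"
  shows "group_invertible p"
proof -
  have pu: "p * u = q * p" using assms by (metis mult.assoc)
  define g where "g = q * q * p"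
  have pg: "p * g = p * u" "g * p = q * p"
    unfolding g_def using assms pu by (metis mult.assoc)+
  have "is_group_inverse p g"
    unfolding is_group_inverse_def using assms pu pg g_def by (metis mult.assoc)
  then show ?thesis by (auto simp: group_invertible_iff)
qed

lemma drazin_eq_group_inverse:
  fixes p g :: "'a::ring_1"
  assumes "is_group_inverse p g"
  shows "drazin p = g"
proof (rule drazin_eqI)
  have "p ^ (1 + 1) * g = p ^ 1"
    using is_group_inverse_absorb(4)[OF assms] by (simp add: mult.assoc)
  then show "is_drazin_inverse p g"
    using assms unfolding is_drazin_inverse_def is_group_inverse_def by blast
qed

text \<open>Cline's formula \<open>(wa)\<^sup>D = w ((aw)\<^sup>D)\<^sup>2 a\<close>, for group invertible \<open>aw\<close>.\<close>

lemma drazin_swap_group_inverse: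
  fixes a w g :: "'a::ring_1"
  assumes "is_group_inverse (a * w) g"
  shows "drazin (w * a) = w * g * g * a"
proof (rule drazin_eqI)
  note g = assms[unfolded is_group_inverse_def] is_group_inverse_absorb[OF assms]
  have left: "w * g * g * a * (w * a) = w * g * a" using g by (metis mult.assoc)
  have right: "w * a * (w * g * g * a) = w * g * a" using g by (metis mult.assoc)
  have "w * g * g * a * (w * a) * (w * g * g * a) = w * g * g * a"
    using left g by (metis mult.assoc)
  moreover have "(w * a) ^ (2 + 1) * (w * g * g * a) = (w * a) ^ 2"
  proof -
    have "(w * a) ^ (2 + 1) * (w * g * g * a) = w * (a * w * (a * w * g)) * a"
      using right by (simp add: numeral_3_eq_3 mult.assoc)
    also have "\<dots> = (w * a) ^ 2"
      using g by (simp add: power2_eq_square) (metis mult.assoc)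
    finally show ?thesis .
  qed
  ultimately show "is_drazin_inverse (w * a) (w * g * g * a)"
    unfolding is_drazin_inverse_def using left right by metis
qed

lemma (in cbanach_star_algebra) invol_eq_if_invol_mult_self:
  assumes "invol q * q = q"
  shows "invol q = q"
  by (metis assms invol_invol invol_mult)

lemma wcore_inverse_imp_group_invertible:
  fixes a w x :: "'a::cbanach_star_algebra"
  assumes "is_wcore_inverse a w x"
  shows "group_invertible (a * w)"
proof -
  from assms have x1: "a * w * x * w * x = x" and x3: "x * w * (a * w) * (a * w) = a * w"
    unfolding is_wcore_inverse_def by (simp_all add: power2_eq_square mult.assoc)
  have "x = a * w * (a * w) * (x * w * x * w * x)" using x1 by (metis mult.assoc)
  then have "a * w = a * w * (a * w) * (x * w * x * w * x * w * (a * w) * (a * w))"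
    using x3 by (metis mult.assoc)
  then show ?thesis using group_invertibleI x3 by (metis mult.assoc)
qed

lemma weighted_eq_drazin_swap_mult:
  fixes a w g z :: "'a::ring_1"
  assumes "is_group_inverse (a * w) g"
  shows "w * a * w * z = w * g * g * a * (w * a * w * a * w * z)"
proof -
  have "g * g * (a * w) * (a * w) * (a * w) = a * w"
    using is_group_inverse_absorb[OF assms] by (metis mult.assoc)
  then show ?thesis by (metis mult.assoc)
qed

lemma wcore_inverse_imp_bc_inverse:
  fixes a w g x :: "'a::cbanach_star_algebra"
  assumes g: "is_group_inverse (a * w) g" and x: "is_wcore_inverse a w x"
  shows "is_bc_inverse (w * a * w) g (invol (w * g * g * a)) x"
proof -
  note g_abs = is_group_inverse_absorb[OF g]
  from x have x1: "a * w * x * w * x = x" and x2: "invol (w * a * w * x) = w * a * w * x"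
    and x3: "x * w * (a * w) * (a * w) = a * w"
    unfolding is_wcore_inverse_def by (simp_all add: power2_eq_square mult.assoc)
  have xwp: "x * w * (a * w) = a * w * g" using x3 g_abs(4) by (metis mult.assoc)
  have xwg: "x * w * g = g * g" using xwp g_abs(2) by (metis mult.assoc)
  have gpx: "g * (a * w) * x = x" using x1 g_abs(3) by (metis mult.assoc)
  have "x * (w * a * w) * g = g" using xwp g_abs(2) by (metis mult.assoc)
  moreover have "invol (w * g * g * a) * (w * a * w) * x = invol (w * g * g * a)"
  proof -
    have "w * a * w * x * (w * g * g * a) = w * g * g * a"
      using xwg g_abs(2) by (metis mult.assoc)
    then show ?thesis using x2 by (metis invol_mult mult.assoc)
  qed
  moreover have "x = x * invol (w * a * w * a * w * x) * invol (w * g * g * a)"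
  proof -
    have "x = x * (w * a * w * x)"
      using xwp gpx assms(1)[unfolded is_group_inverse_def] by (metis mult.assoc)
    then show ?thesis
      using x2 weighted_eq_drazin_swap_mult[OF g, of x] by (metis invol_mult mult.assoc)
  qed
  ultimately show ?thesis
    unfolding is_bc_inverse_def using gpx by metis
qed

lemma bc_inverse_imp_wcore_inverse:
  fixes a w g y :: "'a::cbanach_star_algebra"
  assumes g: "is_group_inverse (a * w) g"
    and y: "is_bc_inverse (w * a * w) g (invol (w * g * g * a)) y"
  shows "is_wcore_inverse a w y"
proof -
  note g_abs = is_group_inverse_absorb[OF g]
  from y obtain u where y1: "y * (w * a * w) * g = g"
    and y2: "invol (w * g * g * a) * (w * a * w) * y = invol (w * g * g * a)"
    and y3: "y = g * u * y"
    unfolding is_bc_inverse_def by blast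
  have "y * w * (a * w) * (a * w) = a * w"
    using y1 g_abs(3) by (metis mult.assoc)
  moreover have "a * w * y * w * y = y"
  proof -
    have "y * w * g = g * g" using y1 g_abs(2) by (metis mult.assoc)
    then show ?thesis using y3 g_abs(2) by (metis mult.assoc)
  qed
  moreover have "invol (w * a * w * y) = w * a * w * y"
  proof (rule invol_eq_if_invol_mult_self)
    have "invol (w * a * w * y) * (w * g * g * a) = w * g * g * a"
      using arg_cong[OF y2, of invol] by (simp add: invol_mult invol_invol mult.assoc)
    then show "invol (w * a * w * y) * (w * a * w * y) = w * a * w * y"
      using weighted_eq_drazin_swap_mult[OF g, of y] by (metis mult.assoc)
  qed
  ultimately show ?thesis
    unfolding is_wcore_inverse_def by (simp add: power2_eq_square mult.assoc)
qed

lemma wcore_inverse_iff_bc_inverse: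
  fixes a w x :: "'a::cbanach_star_algebra"
  assumes "group_invertible (a * w)"
  shows "is_wcore_inverse a w x \<longleftrightarrow>
    is_bc_inverse (w * a * w) (drazin (a * w)) (invol (drazin (w * a))) x"
proof -
  from assms obtain g where g: "is_group_inverse (a * w) g"
    by (auto simp: group_invertible_iff)
  show ?thesis
    unfolding drazin_eq_group_inverse[OF g] drazin_swap_group_inverse[OF g]
    using wcore_inverse_imp_bc_inverse[OF g] bc_inverse_imp_wcore_inverse[OF g] by blast
qed

lemma wcore_inv_eqI:
  fixes a w x :: "'a::cbanach_star_algebra"
  assumes "is_wcore_inverse a w x"
  shows "wcore_inv a w = x"
  unfolding wcore_inv_def
proof (rule the_equality)
  show "is_wcore_inverse a w x" by fact
  have gi: "group_invertible (a * w)"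
    using wcore_inverse_imp_group_invertible[OF assms] .
  show "y = x" if "is_wcore_inverse a w y" for y
    using is_bc_inverse_unique wcore_inverse_iff_bc_inverse[OF gi] assms that by blast
qed

theorem theorem2p7:
  fixes a w :: "'a::cbanach_star_algebra"
  shows "(has_wcore_inverse a w \<longleftrightarrow>
           (group_invertible (a * w) \<and>
            (\<exists>x. is_bc_inverse (w * a * w) (drazin (a * w)) (invol (drazin (w * a))) x))) \<and>
         (has_wcore_inverse a w \<longrightarrow>
           wcore_inv a w = bc_inv (w * a * w) (drazin (a * w)) (invol (drazin (w * a))))"
proof -
  have equiv: "has_wcore_inverse a w \<longleftrightarrow>
      (group_invertible (a * w) \<and>
       (\<exists>x. is_bc_inverse (w * a * w) (drazin (a * w)) (invol (drazin (w * a))) x))"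
    unfolding has_wcore_inverse_def
    using wcore_inverse_imp_group_invertible wcore_inverse_iff_bc_inverse by blast
  have "wcore_inv a w = bc_inv (w * a * w) (drazin (a * w)) (invol (drazin (w * a)))"
    if "has_wcore_inverse a w"
  proof -
    from that obtain x where x: "is_wcore_inverse a w x"
      unfolding has_wcore_inverse_def by blast
    then have "is_bc_inverse (w * a * w) (drazin (a * w)) (invol (drazin (w * a))) x"
      using wcore_inverse_imp_group_invertible wcore_inverse_iff_bc_inverse by blast
    then show ?thesis using wcore_inv_eqI[OF x] bc_inv_eqI by metis
  qed
  with equiv show ?thesis by blast
qed

end
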